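(* Let $X$ be a Banach space and let $M\subseteq B(X)$ be a precompact set. Then $\|M\|_{\chi}=\chi(MX_{\odot})$, where $MX_{\odot}=\{Tx: T\in M,\ x\in X,\ \|x\|\le 1\}$.
   Context: $B(X)$ is the algebra of bounded linear operators on $X$ and $X_\odot$ is the closed unit ball of $X$. For a bounded subset $E$ of a Banach space, the Hausdorff measure of noncompactness $\chi(E)$ is the infimum of all $t>0$ such that $E$ has a finite $t$-net. For $T\in B(X)$, $\|T\|_\chi=\chi(TX_\odot)$, and for a set $M\subseteq B(X)$, $\|M\|_\chi=\sup\{\|T\|_\chi: T\in M\}$. *)

theory Defs
  imports "HOL-Analysis.Analysis"
begin

definition hausdorff_mnc :: "'a::metric_space set \<Rightarrow> real" where
  "hausdorff_mnc E = Inf {t. t > 0 \<and> (\<exists>F. finite F \<and> E \<subseteq> (\<Union>x\<in>F. cball x t))}"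

definition unit_ball :: "'a::real_normed_vector set" where
  "unit_ball = cball 0 1"

definition chi_norm :: "('a::real_normed_vector \<Rightarrow>\<^sub>L 'b::real_normed_vector) \<Rightarrow> real" where
  "chi_norm T = hausdorff_mnc (blinfun_apply T ` unit_ball)"

definition chi_norm_set :: "('a::real_normed_vector \<Rightarrow>\<^sub>L 'b::real_normed_vector) set \<Rightarrow> real" where
  "chi_norm_set M = (if M = {} then 0 else Sup (chi_norm ` M))"

end

theory Submission
  imports Defs
begin

text \<open>Monotonicity of \<open>\<chi>\<close> gives \<open>\<parallel>M\<parallel>\<^sub>\<chi> \<le> \<chi>(MX\<^sub>\<odot>)\<close>. Conversely, take a finite
  \<open>\<epsilon>\<close>-net \<open>K \<subseteq> M\<close>: every \<open>Tx\<close> with \<open>T \<in> M\<close>, \<open>\<parallel>x\<parallel> \<le> 1\<close> lies within \<open>\<epsilon>\<close> of some \<open>Sx\<close>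
  with \<open>S \<in> K\<close>, so \<open>\<chi>(MX\<^sub>\<odot>) \<le> \<chi>(\<Union>\<^sub>S\<^sub>\<in>\<^sub>K SX\<^sub>\<odot>) + \<epsilon>\<close>, and the measure of a finite union
  is the largest measure of its members, which is at most \<open>\<parallel>M\<parallel>\<^sub>\<chi>\<close>.\<close>

definition net_radii :: "'a::metric_space set \<Rightarrow> real set" where
  "net_radii E = {t. t > 0 \<and> (\<exists>F. finite F \<and> E \<subseteq> (\<Union>x\<in>F. cball x t))}"

lemma hausdorff_mnc_eq_Inf_net_radii: "hausdorff_mnc E = Inf (net_radii E)"
  by (simp add: hausdorff_mnc_def net_radii_def)

lemma bdd_below_net_radii: "bdd_below (net_radii E)"
  unfolding net_radii_def by (rule bdd_belowI[of _ 0]) auto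

lemma net_radii_nonempty:
  assumes "bounded E"
  shows "net_radii E \<noteq> {}"
proof -
  obtain x r where "\<forall>y\<in>E. dist x y \<le> r"
    using assms bounded_def by blast
  then have "max r 1 \<in> net_radii E"
    unfolding net_radii_def by (force intro!: exI[of _ "{x}"])
  then show ?thesis
    by blast
qed

lemma hausdorff_mnc_le:
  assumes "t > 0" "finite F" "E \<subseteq> (\<Union>x\<in>F. cball x t)"
  shows "hausdorff_mnc E \<le> t"
  unfolding hausdorff_mnc_eq_Inf_net_radii
  using assms by (intro cInf_lower bdd_below_net_radii) (auto simp: net_radii_def)

lemma hausdorff_mnc_nonneg:
  assumes "bounded E"
  shows "0 \<le> hausdorff_mnc E"
  unfolding hausdorff_mnc_eq_Inf_net_radii
  using net_radii_nonempty[OF assms] by (intro cInf_greatest) (auto simp: net_radii_def)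

lemma hausdorff_mnc_mono:
  assumes "bounded E'" "E \<subseteq> E'"
  shows "hausdorff_mnc E \<le> hausdorff_mnc E'"
  unfolding hausdorff_mnc_eq_Inf_net_radii
proof (rule cInf_superset_mono[OF net_radii_nonempty[OF assms(1)] bdd_below_net_radii])
  show "net_radii E' \<subseteq> net_radii E"
    using assms(2) unfolding net_radii_def by blast
qed

lemma hausdorff_mnc_empty: "hausdorff_mnc ({} :: 'a::metric_space set) = 0"
proof -
  have "net_radii ({} :: 'a set) = {0<..}"
    by (auto simp: net_radii_def)
  then show ?thesis
    by (simp add: hausdorff_mnc_eq_Inf_net_radii cInf_greaterThan)
qed

lemma finite_cover_if_hausdorff_mnc_less:
  assumes "bounded E" "hausdorff_mnc E < t"
  obtains F where "finite F" "E \<subseteq> (\<Union>x\<in>F. cball x t)"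
proof -
  have "Inf (net_radii E) < t"
    using assms(2) by (simp add: hausdorff_mnc_eq_Inf_net_radii)
  then obtain t' where "t' \<in> net_radii E" "t' < t"
    using cInf_lessD[OF net_radii_nonempty[OF assms(1)]] by blast
  then obtain F where "finite F" and cover: "E \<subseteq> (\<Union>x\<in>F. cball x t')"
    unfolding net_radii_def by blast
  have "(\<Union>x\<in>F. cball x t') \<subseteq> (\<Union>x\<in>F. cball x t)"
    using \<open>t' < t\<close> by (intro UN_mono) auto
  then show ?thesis
    using that \<open>finite F\<close> cover by blast
qed

lemma hausdorff_mnc_le_add_dist:
  assumes "bounded B" "0 \<le> d" "\<And>a. a \<in> A \<Longrightarrow> \<exists>b\<in>B. dist a b \<le> d"
  shows "hausdorff_mnc A \<le> hausdorff_mnc B + d"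
proof -
  have "hausdorff_mnc A - d \<le> Inf (net_radii B)"
  proof (rule cInf_greatest[OF net_radii_nonempty[OF assms(1)]])
    fix t assume "t \<in> net_radii B"
    then obtain F where "t > 0" "finite F" and cover: "B \<subseteq> (\<Union>x\<in>F. cball x t)"
      by (auto simp: net_radii_def)
    have "A \<subseteq> (\<Union>x\<in>F. cball x (t + d))"
    proof
      fix a assume "a \<in> A"
      then obtain b x where "dist a b \<le> d" "x \<in> F" "dist x b \<le> t"
        using assms(3) cover by fastforce
      moreover have "dist x a \<le> dist x b + dist a b"
        by (rule dist_triangle2)
      ultimately have "dist x a \<le> t + d"
        by linarith
      with \<open>x \<in> F\<close> show "a \<in> (\<Union>x\<in>F. cball x (t + d))"
        by auto
    qed
    then have "hausdorff_mnc A \<le> t + d"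
      using \<open>t > 0\<close> \<open>finite F\<close> assms(2) by (intro hausdorff_mnc_le) auto
    then show "hausdorff_mnc A - d \<le> t"
      by simp
  qed
  then show ?thesis
    by (simp add: hausdorff_mnc_eq_Inf_net_radii)
qed

lemma hausdorff_mnc_UN_le:
  assumes "finite I" "0 \<le> c"
    and "\<And>i. i \<in> I \<Longrightarrow> bounded (A i)" "\<And>i. i \<in> I \<Longrightarrow> hausdorff_mnc (A i) \<le> c"
  shows "hausdorff_mnc (\<Union>i\<in>I. A i) \<le> c"
proof (rule dense_ge)
  fix t assume "c < t"
  have "\<exists>F. finite F \<and> A i \<subseteq> (\<Union>x\<in>F. cball x t)" if "i \<in> I" for i
    using finite_cover_if_hausdorff_mnc_less[OF assms(3)[OF that]] assms(4)[OF that] \<open>c < t\<close>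
    by (metis le_less_trans)
  then obtain F where "\<And>i. i \<in> I \<Longrightarrow> finite (F i) \<and> A i \<subseteq> (\<Union>x\<in>F i. cball x t)"
    by metis
  then have "finite (\<Union>i\<in>I. F i)" and "(\<Union>i\<in>I. A i) \<subseteq> (\<Union>x\<in>(\<Union>i\<in>I. F i). cball x t)"
    using assms(1) by blast+
  then show "hausdorff_mnc (\<Union>i\<in>I. A i) \<le> t"
    by (rule hausdorff_mnc_le[rotated]) (use \<open>c < t\<close> assms(2) in linarith)
qed

lemma totally_bounded_finite_subset_net:
  assumes "totally_bounded S" "e > 0"
  obtains K where "finite K" "K \<subseteq> S" "S \<subseteq> (\<Union>x\<in>K. ball x e)"
proof -
  obtain C where "finite C" and cover: "S \<subseteq> (\<Union>c\<in>C. {y. dist c y < e/2})"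
    using assms(1) half_gt_zero[OF assms(2)] unfolding totally_bounded_metric by blast
  define C' where "C' = {c\<in>C. \<exists>y\<in>S. dist c y < e/2}"
  have "\<forall>c\<in>C'. \<exists>y. y \<in> S \<and> dist c y < e/2"
    by (auto simp: C'_def)
  then obtain p where p: "\<And>c. c \<in> C' \<Longrightarrow> p c \<in> S \<and> dist c (p c) < e/2"
    by (metis (no_types))
  show ?thesis
  proof (rule that[of "p ` C'"])
    show "finite (p ` C')"
      using \<open>finite C\<close> by (simp add: C'_def)
    show "p ` C' \<subseteq> S"
      using p by blast
    show "S \<subseteq> (\<Union>x\<in>p ` C'. ball x e)"
    proof
      fix y assume "y \<in> S"
      then obtain c where "c \<in> C" "dist c y < e/2"
        using cover by blast
      then have "c \<in> C'"
        using \<open>y \<in> S\<close> by (auto simp: C'_def)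
      have "dist (p c) y \<le> dist c (p c) + dist c y"
        by (rule dist_triangle3)
      then have "y \<in> ball (p c) e"
        using p[OF \<open>c \<in> C'\<close>] \<open>dist c y < e/2\<close> by simp
      then show "y \<in> (\<Union>x\<in>p ` C'. ball x e)"
        using \<open>c \<in> C'\<close> by blast
    qed
  qed
qed

lemma totally_bounded_imp_bounded:
  assumes "totally_bounded S"
  shows "bounded S"
proof -
  obtain K where "finite K" "K \<subseteq> S" "S \<subseteq> (\<Union>x\<in>K. ball x 1)"
    by (rule totally_bounded_finite_subset_net[OF assms zero_less_one])
  then show ?thesis
    by (meson bounded_UN bounded_ball bounded_subset)
qed

lemma dist_blinfun_apply_le:
  assumes "norm x \<le> 1"
  shows "dist (blinfun_apply S x) (blinfun_apply T x) \<le> dist S T"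
proof -
  have "dist (blinfun_apply S x) (blinfun_apply T x) = norm (blinfun_apply (S - T) x)"
    by (simp add: dist_norm blinfun.diff_left)
  also have "\<dots> \<le> norm (S - T) * norm x"
    by (rule norm_blinfun)
  also have "\<dots> \<le> dist S T"
    using assms by (simp add: dist_norm mult_left_le)
  finally show ?thesis .
qed

lemma bounded_blinfun_image_unit_ball: "bounded (blinfun_apply T ` unit_ball)"
  unfolding unit_ball_def by (intro bounded_linear_image bounded_cball blinfun.bounded_linear_right)

lemma chi_norm_nonneg: "0 \<le> chi_norm T"
  unfolding chi_norm_def by (rule hausdorff_mnc_nonneg[OF bounded_blinfun_image_unit_ball])

lemma bounded_blinfun_images:
  assumes "bounded M"
  shows "bounded {blinfun_apply T x | T x. T \<in> M \<and> norm x \<le> 1}"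
proof -
  obtain B where B: "\<And>T. T \<in> M \<Longrightarrow> norm T \<le> B"
    using assms bounded_iff by blast
  have "norm (blinfun_apply T x) \<le> B" if "T \<in> M" "norm x \<le> 1" for T x
    using dist_blinfun_apply_le[OF that(2), of T 0] B[OF that(1)] by simp
  then show ?thesis
    unfolding bounded_iff by blast
qed

lemma chi_norm_le_hausdorff_mnc_images:
  assumes "bounded M" "T \<in> M"
  shows "chi_norm T \<le> hausdorff_mnc {blinfun_apply T x | T x. T \<in> M \<and> norm x \<le> 1}"
  unfolding chi_norm_def using assms
  by (intro hausdorff_mnc_mono bounded_blinfun_images) (auto simp: unit_ball_def intro!: exI[of _ T])

lemma hausdorff_mnc_images_le:
  assumes "totally_bounded M" "0 \<le> c" "\<And>T. T \<in> M \<Longrightarrow> chi_norm T \<le> c"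
  shows "hausdorff_mnc {blinfun_apply T x | T x. T \<in> M \<and> norm x \<le> 1} \<le> c"
proof (rule field_le_epsilon)
  fix e :: real assume "e > 0"
  then obtain K where K: "finite K" "K \<subseteq> M" "M \<subseteq> (\<Union>S\<in>K. ball S e)"
    using totally_bounded_finite_subset_net[OF assms(1)] by metis
  let ?B = "\<Union>S\<in>K. blinfun_apply S ` unit_ball"
  have "hausdorff_mnc {blinfun_apply T x | T x. T \<in> M \<and> norm x \<le> 1} \<le> hausdorff_mnc ?B + e"
  proof (rule hausdorff_mnc_le_add_dist)
    show "bounded ?B"
      using K(1) bounded_blinfun_image_unit_ball by blast
    fix y assume "y \<in> {blinfun_apply T x | T x. T \<in> M \<and> norm x \<le> 1}"
    then obtain T x where y: "y = blinfun_apply T x" "T \<in> M" "norm x \<le> 1"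
      by blast
    then obtain S where "S \<in> K" "dist T S < e"
      using K(3) by (auto simp: dist_commute)
    have "blinfun_apply S x \<in> ?B"
      using \<open>S \<in> K\<close> y(3) unfolding unit_ball_def by (intro UN_I imageI) auto
    moreover have "dist y (blinfun_apply S x) \<le> e"
      using dist_blinfun_apply_le[OF y(3), of T S] \<open>dist T S < e\<close> y(1) by simp
    ultimately show "\<exists>b\<in>?B. dist y b \<le> e"
      by blast
  qed (use \<open>e > 0\<close> in simp)
  also have "hausdorff_mnc ?B \<le> c"
    using K(1,2) assms(2,3) bounded_blinfun_image_unit_ball
    by (intro hausdorff_mnc_UN_le) (auto simp: chi_norm_def)
  finally show "hausdorff_mnc {blinfun_apply T x | T x. T \<in> M \<and> norm x \<le> 1} \<le> c + e"
    by simp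
qed

theorem lemma2p1:
  fixes M :: "('a::banach \<Rightarrow>\<^sub>L 'a) set"
  assumes "totally_bounded M"
  shows "chi_norm_set M = hausdorff_mnc {blinfun_apply T x | T x. T \<in> M \<and> norm x \<le> 1}"
proof (cases "M = {}")
  case True
  then show ?thesis
    by (simp add: chi_norm_set_def hausdorff_mnc_empty)
next
  case False
  have M_bounded: "bounded M"
    using assms by (rule totally_bounded_imp_bounded)
  have bdd: "bdd_above (chi_norm ` M)"
    using chi_norm_le_hausdorff_mnc_images[OF M_bounded] by (intro bdd_aboveI2)
  obtain T0 where "T0 \<in> M"
    using False by blast
  have "0 \<le> Sup (chi_norm ` M)"
    using chi_norm_nonneg[of T0] cSUP_upper[OF \<open>T0 \<in> M\<close> bdd] by linarith
  then have "hausdorff_mnc {blinfun_apply T x | T x. T \<in> M \<and> norm x \<le> 1} \<le> Sup (chi_norm ` M)"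
    using cSUP_upper[OF _ bdd] by (rule hausdorff_mnc_images_le[OF assms])
  moreover have "Sup (chi_norm ` M) \<le> hausdorff_mnc {blinfun_apply T x | T x. T \<in> M \<and> norm x \<le> 1}"
    using False chi_norm_le_hausdorff_mnc_images[OF M_bounded] by (intro cSUP_least)
  ultimately show ?thesis
    using False by (simp add: chi_norm_set_def)
qed

end
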